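(* Let $\mathcal G$ be a family of connected graphs and $k$ a constant. The following are equivalent: (1) there is a polynomial $p_k$ such that for every $G=(V,E)\in\mathcal G$, a uniformly random spanning tree of $G$ is $k$-splittable with probability at least $1/p_k(|V|)$; (2) there is a polynomial $q_k$ such that for every $G=(V,E)\in\mathcal G$, a random connected $k$-partition of $G$ drawn with probability proportional to its spanning tree weight is balanced with probability at least $1/q_k(|V|)$.
   Context: A tree $T$ is $k$-splittable if there exist $k-1$ edges of $T$ whose removal leaves a forest whose $k$ connected components all have the same number of vertices. A connected $k$-partition of $G=(V,E)$ is a partition of $V$ into $k$ nonempty sets (pieces) each inducing a connected subgraph; it is balanced if all pieces have equal size. For a graph $H$, $\tau(H)$ is its number of spanning trees, and the spanning tree weight of a connected partition $P$ is $\prod_{S\in P}\tau(G[S])$. *)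

theory Defs
  imports "HOL-Computational_Algebra.Polynomial"
begin

definition wf_graph :: "'a set \<Rightarrow> 'a set set \<Rightarrow> bool" where
  "wf_graph V E \<longleftrightarrow> finite V \<and> (\<forall>e\<in>E. e \<subseteq> V \<and> card e = 2)"

definition adj :: "'a set set \<Rightarrow> ('a \<times> 'a) set" where
  "adj E = {(u, v). {u, v} \<in> E}"

definition graph_connected :: "'a set \<Rightarrow> 'a set set \<Rightarrow> bool" where
  "graph_connected V E \<longleftrightarrow> V \<noteq> {} \<and> (\<forall>u\<in>V. \<forall>v\<in>V. (u, v) \<in> (adj E)\<^sup>*)"

definition induced_edges :: "'a set set \<Rightarrow> 'a set \<Rightarrow> 'a set set" where
  "induced_edges E S = {e\<in>E. e \<subseteq> S}"

definition components :: "'a set \<Rightarrow> 'a set set \<Rightarrow> 'a set set" where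
  "components V E = (\<lambda>u. {v\<in>V. (u, v) \<in> (adj E)\<^sup>*}) ` V"

definition is_tree :: "'a set \<Rightarrow> 'a set set \<Rightarrow> bool" where
  "is_tree V T \<longleftrightarrow> graph_connected V T \<and> (\<forall>e\<in>T. \<not> graph_connected V (T - {e}))"

definition spanning_trees :: "'a set \<Rightarrow> 'a set set \<Rightarrow> 'a set set set" where
  "spanning_trees V E = {T. T \<subseteq> E \<and> is_tree V T}"

definition tau :: "'a set \<Rightarrow> 'a set set \<Rightarrow> nat" where
  "tau V E = card (spanning_trees V E)"

definition k_splittable :: "nat \<Rightarrow> 'a set \<Rightarrow> 'a set set \<Rightarrow> bool" where
  "k_splittable k V T \<longleftrightarrow>
     (\<exists>F. F \<subseteq> T \<and> card F = k - 1 \<and> card (components V (T - F)) = k \<and>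
          (\<forall>C\<in>components V (T - F). \<forall>D\<in>components V (T - F). card C = card D))"

definition prob_splittable :: "nat \<Rightarrow> 'a set \<Rightarrow> 'a set set \<Rightarrow> real" where
  "prob_splittable k V E =
     real (card {T\<in>spanning_trees V E. k_splittable k V T}) / real (card (spanning_trees V E))"

definition connected_k_partitions :: "nat \<Rightarrow> 'a set \<Rightarrow> 'a set set \<Rightarrow> 'a set set set" where
  "connected_k_partitions k V E =
     {P. card P = k \<and> \<Union>P = V \<and> (\<forall>S\<in>P. \<forall>S'\<in>P. S \<noteq> S' \<longrightarrow> S \<inter> S' = {}) \<and>
         (\<forall>S\<in>P. S \<noteq> {} \<and> graph_connected S (induced_edges E S))}"

definition balanced :: "'a set set \<Rightarrow> bool" where
  "balanced P \<longleftrightarrow> (\<forall>S\<in>P. \<forall>S'\<in>P. card S = card S')"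

definition st_weight :: "'a set set \<Rightarrow> 'a set set \<Rightarrow> nat" where
  "st_weight E P = (\<Prod>S\<in>P. tau S (induced_edges E S))"

definition prob_balanced :: "nat \<Rightarrow> 'a set \<Rightarrow> 'a set set \<Rightarrow> real" where
  "prob_balanced k V E =
     real (\<Sum>P\<in>{P\<in>connected_k_partitions k V E. balanced P}. st_weight E P) /
     real (\<Sum>P\<in>connected_k_partitions k V E. st_weight E P)"

end

theory Submission
  imports Defs "HOL-Library.FuncSet"
begin

text \<open>Both probabilities are ratios of numbers of spanning forests. Choosing a connected
  k-partition together with a spanning tree of every piece is the same as choosing a spanning
  forest with k components, so the total spanning tree weight of the connected k-partitions
  counts these forests, and the balanced partitions count the forests whose components have
  equal size. Deleting k - 1 edges of a spanning tree yields a forest with k components, and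
  adding k - 1 edges of G to such a forest yields a spanning tree; in both directions the
  relation is at most (|E| choose k - 1) \<le> n^(2(k - 1)) to one, and a tree is k-splittable exactly
  when it arises from a balanced forest. Hence each probability is at least the other one
  divided by n^(4(k - 1)).\<close>

section \<open>Reachability and components\<close>

definition reach :: "'a set set \<Rightarrow> 'a \<Rightarrow> 'a \<Rightarrow> bool" where
  "reach A x y \<longleftrightarrow> (x, y) \<in> (adj A)\<^sup>*"

definition forest :: "'a set set \<Rightarrow> bool" where
  "forest A \<longleftrightarrow> (\<forall>p q. {p, q} \<in> A \<longrightarrow> \<not> reach (A - {{p, q}}) p q)"

definition component :: "'a set \<Rightarrow> 'a set set \<Rightarrow> 'a \<Rightarrow> 'a set" where
  "component V A x = {y\<in>V. reach A x y}"

definition edges_on :: "'a set \<Rightarrow> 'a set set \<Rightarrow> bool" where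
  "edges_on V A \<longleftrightarrow> (\<forall>e\<in>A. e \<subseteq> V \<and> card e = 2)"

lemma wf_graph_iff: "wf_graph V E \<longleftrightarrow> finite V \<and> edges_on V E"
  by (simp add: wf_graph_def edges_on_def)

lemma components_eq_image_component: "components V A = component V A ` V"
  by (simp add: components_def component_def reach_def)

lemma graph_connected_iff_reach:
  "graph_connected V A \<longleftrightarrow> V \<noteq> {} \<and> (\<forall>u\<in>V. \<forall>v\<in>V. reach A u v)"
  by (simp add: graph_connected_def reach_def)

lemma adj_iff [simp]: "(x, y) \<in> adj A \<longleftrightarrow> {x, y} \<in> A"
  by (simp add: adj_def)

lemma reach_refl [simp]: "reach A x x"
  by (simp add: reach_def)

lemma reach_trans: "reach A x y \<Longrightarrow> reach A y z \<Longrightarrow> reach A x z"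
  unfolding reach_def by (rule rtrancl_trans)

lemma reach_edge: "{x, y} \<in> A \<Longrightarrow> reach A x y"
  unfolding reach_def by (rule r_into_rtrancl) simp

lemma reach_sym: "reach A x y \<Longrightarrow> reach A y x"
proof -
  have "sym (adj A)"
    unfolding sym_def by (simp add: insert_commute)
  then have "sym ((adj A)\<^sup>*)"
    by (rule sym_rtrancl)
  then show "reach A x y \<Longrightarrow> reach A y x"
    unfolding reach_def sym_def by blast
qed

lemma reach_mono: "A \<subseteq> B \<Longrightarrow> reach A x y \<Longrightarrow> reach B x y"
  unfolding reach_def using rtrancl_mono[of "adj A" "adj B"] by (auto simp: adj_def)

lemma reach_insert:
  "reach (insert {a, b} A) x y \<longleftrightarrow>
     reach A x y \<or> (reach A x a \<and> reach A b y) \<or> (reach A x b \<and> reach A a y)"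
proof
  assume "reach (insert {a, b} A) x y"
  then show "reach A x y \<or> (reach A x a \<and> reach A b y) \<or> (reach A x b \<and> reach A a y)"
    unfolding reach_def[of "insert {a, b} A"]
  proof (induction rule: rtrancl_induct)
    case (step y z)
    then have "{y, z} = {a, b} \<or> reach A y z"
      by (auto intro: reach_edge)
    then show ?case
      using step.IH by (auto simp: doubleton_eq_iff intro: reach_trans reach_sym)
  qed simp
next
  have "reach (insert {a, b} A) a b" "reach (insert {a, b} A) b a"
    by (auto intro!: reach_edge simp: insert_commute)
  moreover have "reach A u v \<Longrightarrow> reach (insert {a, b} A) u v" for u v
    by (rule reach_mono[of A]) auto
  moreover assume "reach A x y \<or> (reach A x a \<and> reach A b y) \<or> (reach A x b \<and> reach A a y)"
  ultimately show "reach (insert {a, b} A) x y"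
    by (metis reach_trans)
qed

lemma reach_induced_edges:
  assumes "reach A y z" "y \<in> C" and closed: "\<forall>p q. {p, q} \<in> A \<longrightarrow> p \<in> C \<longrightarrow> q \<in> C"
  shows "z \<in> C \<and> reach (induced_edges A C) y z"
  using assms(1) unfolding reach_def[of A]
proof (induction rule: rtrancl_induct)
  case base
  then show ?case using assms(2) by simp
next
  case (step u w)
  then have "{u, w} \<in> A" "u \<in> C" "w \<in> C"
    using closed by auto
  then have "reach (induced_edges A C) u w"
    by (intro reach_edge) (simp add: induced_edges_def)
  then show ?case
    using step.IH \<open>w \<in> C\<close> reach_trans by metis
qed

lemma component_self: "x \<in> V \<Longrightarrow> x \<in> component V A x"
  by (simp add: component_def)

lemma component_eq: "reach A x y \<Longrightarrow> component V A x = component V A y"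
  unfolding component_def by (auto intro: reach_trans reach_sym)

lemma component_closed:
  assumes "edges_on V A" "{p, q} \<in> A" "p \<in> component V A x"
  shows "q \<in> component V A x"
  using assms reach_trans[OF _ reach_edge[of p q A]] by (auto simp: component_def edges_on_def)

lemma component_connected:
  assumes "edges_on V A" "x \<in> V"
  shows "graph_connected (component V A x) (induced_edges A (component V A x))"
  unfolding graph_connected_iff_reach
proof (intro conjI ballI)
  show "component V A x \<noteq> {}"
    using component_self[OF assms(2)] by blast
  fix u v assume u: "u \<in> component V A x" and v: "v \<in> component V A x"
  then have "reach A u v"
    by (auto simp: component_def intro: reach_trans reach_sym)
  then show "reach (induced_edges A (component V A x)) u v"
    using reach_induced_edges[OF _ u] component_closed[OF assms(1)] by blast
qed

lemma components_disjoint: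
  assumes "C \<in> components V A" "D \<in> components V A" "C \<noteq> D"
  shows "C \<inter> D = {}"
proof (rule ccontr)
  assume "C \<inter> D \<noteq> {}"
  then obtain z where "z \<in> C" "z \<in> D" by blast
  moreover obtain x y where "C = component V A x" "D = component V A y"
    using assms(1,2) by (auto simp: components_eq_image_component)
  ultimately have "reach A x z" "reach A y z"
    by (simp_all add: component_def)
  then have "C = component V A z" "D = component V A z"
    using \<open>C = component V A x\<close> \<open>D = component V A y\<close> by (simp_all add: component_eq)
  with assms(3) show False by simp
qed

lemma Union_components: "\<Union> (components V A) = V"
  by (auto simp: components_eq_image_component component_def)

lemma components_of_connected:
  assumes "graph_connected V A"
  shows "components V A = {V}"
proof -
  have "component V A x = V" if "x \<in> V" for x
    using assms that by (auto simp: graph_connected_iff_reach component_def)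
  then show ?thesis
    using assms by (auto simp: components_eq_image_component graph_connected_iff_reach)
qed

lemma connected_if_card_components_1:
  assumes "card (components V A) = 1"
  shows "graph_connected V A"
proof -
  obtain C where C: "components V A = {C}"
    using assms card_1_singletonE by blast
  have "component V A u = C" if "u \<in> V" for u
    using that C unfolding components_eq_image_component by blast
  then have "reach A u v" if "u \<in> V" "v \<in> V" for u v
    using that component_self[OF that(2), of A] unfolding component_def by blast
  moreover have "V \<noteq> {}"
    using C unfolding components_eq_image_component by blast
  ultimately show ?thesis
    by (simp add: graph_connected_iff_reach)
qed

lemma components_empty: "components V {} = (\<lambda>x. {x}) ` V"
proof -
  have "reach {} x y \<longleftrightarrow> x = y" for x y :: 'a
    by (simp add: reach_def adj_def)
  then show ?thesis
    by (auto simp: components_eq_image_component component_def)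
qed

lemma component_insert_edge:
  assumes "\<not> reach A p q"
  shows "component V (insert {p, q} A) x =
    (if reach A x p \<or> reach A x q then component V A p \<union> component V A q else component V A x)"
proof (cases "reach A x p \<or> reach A x q")
  case True
  then have "reach (insert {p, q} A) x y \<longleftrightarrow> reach A p y \<or> reach A q y" for y
    using assms unfolding reach_insert by (meson reach_sym reach_trans)
  then show ?thesis
    using True by (auto simp: component_def)
next
  case False
  then have "reach (insert {p, q} A) x y \<longleftrightarrow> reach A x y" for y
    unfolding reach_insert by blast
  then show ?thesis
    using False by (auto simp: component_def)
qed

lemma components_insert_edge:
  assumes pV: "p \<in> V" and nr: "\<not> reach A p q"
  shows "components V (insert {p, q} A) =
    insert (component V A p \<union> component V A q)
      (components V A - {component V A p, component V A q})"
  unfolding components_eq_image_component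
proof (intro equalityI subsetI)
  let ?c = "component V A"
  fix C assume "C \<in> component V (insert {p, q} A) ` V"
  then obtain x where x: "x \<in> V" "C = component V (insert {p, q} A) x"
    by blast
  show "C \<in> insert (?c p \<union> ?c q) (?c ` V - {?c p, ?c q})"
  proof (cases "reach A x p \<or> reach A x q")
    case False
    then have "x \<notin> ?c p" "x \<notin> ?c q"
      by (auto simp: component_def dest: reach_sym)
    then have "?c x \<noteq> ?c p" "?c x \<noteq> ?c q"
      using component_self[OF x(1)] by metis+
    then show ?thesis
      using x component_insert_edge[OF nr] False by auto
  qed (use x component_insert_edge[OF nr] in simp)
next
  let ?c = "component V A"
  fix C assume C: "C \<in> insert (?c p \<union> ?c q) (?c ` V - {?c p, ?c q})"
  show "C \<in> component V (insert {p, q} A) ` V"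
  proof (cases "C = ?c p \<union> ?c q")
    case True
    then show ?thesis
      using component_insert_edge[OF nr, of V p] pV by (metis image_eqI reach_refl)
  next
    case False
    then obtain x where "x \<in> V" "C = ?c x" "?c x \<noteq> ?c p" "?c x \<noteq> ?c q"
      using C by auto
    moreover from this have "\<not> reach A x p" "\<not> reach A x q"
      by (blast dest: component_eq)+
    ultimately show ?thesis
      using component_insert_edge[OF nr, of V x] by (metis image_eqI)
  qed
qed

lemma card_components_insert:
  assumes fin: "finite V" and pV: "p \<in> V" and qV: "q \<in> V" and nr: "\<not> reach A p q"
  shows "card (components V (insert {p, q} A)) + 1 = card (components V A)"
proof -
  let ?c = "component V A"
  have "?c p \<noteq> ?c q"
  proof
    assume "?c p = ?c q"
    then have "q \<in> ?c p"
      using component_self[OF qV] by simp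
    then show False
      using nr by (simp add: component_def)
  qed
  have "?c p \<union> ?c q \<notin> components V A - {?c p, ?c q}"
  proof
    assume "?c p \<union> ?c q \<in> components V A - {?c p, ?c q}"
    then obtain x where x: "x \<in> V" "?c x = ?c p \<union> ?c q" "?c x \<noteq> ?c p"
      by (auto simp: components_eq_image_component)
    then have "p \<in> ?c x"
      using component_self[OF pV] by blast
    then have "reach A x p"
      by (simp add: component_def)
    then show False
      using x component_eq by metis
  qed
  moreover have "finite (components V A)"
    using fin by (simp add: components_eq_image_component)
  moreover have "{?c p, ?c q} \<subseteq> components V A"
    using pV qV by (auto simp: components_eq_image_component)
  ultimately show ?thesis
    using components_insert_edge[OF pV nr] \<open>?c p \<noteq> ?c q\<close>
      card_mono[of "components V A" "{?c p, ?c q}"]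
    by (simp add: card_Diff_subset)
qed

section \<open>Forests\<close>

lemma finite_edges: "finite V \<Longrightarrow> edges_on V A \<Longrightarrow> finite A"
  by (rule finite_subset[of A "Pow V"]) (auto simp: edges_on_def)

lemma edges_onE:
  assumes "edges_on V A" "e \<in> A"
  obtains u v where "e = {u, v}" "u \<noteq> v" "u \<in> V" "v \<in> V"
proof -
  have "card e = 2" "e \<subseteq> V"
    using assms by (auto simp: edges_on_def)
  then show ?thesis
    using that by (auto simp: card_2_iff)
qed

lemma edges_on_subset: "edges_on V E \<Longrightarrow> A \<subseteq> E \<Longrightarrow> edges_on V A"
  by (auto simp: edges_on_def)

lemma forest_subset: "forest B \<Longrightarrow> A \<subseteq> B \<Longrightarrow> forest A"
  unfolding forest_def by (meson Diff_mono order_refl reach_mono subsetD)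

lemma forest_insert:
  assumes "forest A" "\<not> reach A p q"
  shows "forest (insert {p, q} A)"
  unfolding forest_def
proof (intro allI impI)
  fix u v assume uv: "{u, v} \<in> insert {p, q} A"
  have "{p, q} \<notin> A"
    using assms(2) reach_edge[of p q A] by blast
  show "\<not> reach (insert {p, q} A - {{u, v}}) u v"
  proof (cases "{u, v} = {p, q}")
    case True
    then have "insert {p, q} A - {{u, v}} = A"
      using \<open>{p, q} \<notin> A\<close> by auto
    moreover have "(u = p \<and> v = q) \<or> (u = q \<and> v = p)"
      using True by (simp add: doubleton_eq_iff)
    ultimately show ?thesis
      using assms(2) reach_sym by metis
  next
    case False
    let ?A = "A - {{u, v}}"
    have "{u, v} \<in> A" and eq: "insert {p, q} A - {{u, v}} = insert {p, q} ?A"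
      using uv False by auto
    then have "\<not> reach ?A u v" "reach A u v"
      using assms(1) by (auto simp: forest_def intro: reach_edge)
    have mono: "reach A s t" if "reach ?A s t" for s t
      using reach_mono[OF _ that] by blast
    show ?thesis
    proof
      assume "reach (insert {p, q} A - {{u, v}}) u v"
      then have "reach ?A u v \<or> (reach ?A u p \<and> reach ?A q v) \<or> (reach ?A u q \<and> reach ?A p v)"
        unfolding eq reach_insert .
      then have "reach A u p \<and> reach A q v \<or> reach A u q \<and> reach A p v"
        using \<open>\<not> reach ?A u v\<close> mono by blast
      then show False
        using \<open>reach A u v\<close> assms(2) by (meson reach_sym reach_trans)
    qed
  qed
qed

lemma tree_is_forest:
  assumes "is_tree W T" "edges_on W T"
  shows "forest T"
  unfolding forest_def
proof (intro allI impI notI)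
  fix p q assume e: "{p, q} \<in> T" and r: "reach (T - {{p, q}}) p q"
  have "graph_connected W (T - {{p, q}})"
    unfolding graph_connected_iff_reach
  proof (intro conjI ballI)
    show "W \<noteq> {}"
      using e assms(2) by (auto simp: edges_on_def)
    fix x y assume "x \<in> W" "y \<in> W"
    then have "reach (insert {p, q} (T - {{p, q}})) x y"
      using assms(1) e by (auto simp: is_tree_def graph_connected_iff_reach insert_absorb)
    then show "reach (T - {{p, q}}) x y"
      unfolding reach_insert using r by (metis reach_sym reach_trans)
  qed
  then show False
    using assms(1) e by (auto simp: is_tree_def)
qed

lemma connected_forest_is_tree:
  assumes "forest T" "graph_connected W T" "edges_on W T"
  shows "is_tree W T"
  unfolding is_tree_def
proof (intro conjI ballI notI)
  fix e assume e: "e \<in> T" and conn: "graph_connected W (T - {e})"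
  obtain u v where uv: "e = {u, v}" "u \<in> W" "v \<in> W"
    using edges_onE[OF assms(3) e] by metis
  then have "reach (T - {e}) u v"
    using conn by (simp add: graph_connected_iff_reach)
  then show False
    using assms(1) e uv by (simp add: forest_def)
qed (fact assms(2))

lemma card_components_forest:
  assumes "finite V" "edges_on V A" "forest A"
  shows "card (components V A) + card A = card V"
  using finite_edges[OF assms(1,2)] assms(2,3)
proof (induction A rule: finite_induct)
  case empty
  then show ?case
    by (simp add: components_empty card_image)
next
  case (insert e A)
  obtain p q where pq: "e = {p, q}" "p \<in> V" "q \<in> V"
    using edges_onE[OF insert.prems(1), of e] by blast
  have "forest A" "edges_on V A"
    using insert.prems forest_subset edges_on_subset by blast+
  moreover have "\<not> reach A p q"
    using insert.prems insert.hyps pq by (simp add: forest_def insert_Diff_if)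
  then have "card (components V (insert {p, q} A)) + 1 = card (components V A)"
    by (rule card_components_insert[OF assms(1) pq(2,3)])
  ultimately show ?case
    using insert.IH insert.hyps pq(1) by simp
qed

lemma edge_leaving_component:
  assumes "graph_connected V E" "x \<in> V" "y \<in> V" "\<not> reach A x y"
  shows "\<exists>p q. {p, q} \<in> E \<and> p \<in> component V A x \<and> q \<notin> component V A x"
proof (rule ccontr)
  assume "\<not> ?thesis"
  then have "y \<in> component V A x"
    using reach_induced_edges[of E x y "component V A x"] component_self[OF assms(2)] assms(1-3)
    by (auto simp: graph_connected_iff_reach)
  then show False
    using assms(4) by (simp add: component_def)
qed

lemma forest_extends_by_edges:
  assumes fin: "finite V" and eE: "edges_on V E" and conn: "graph_connected V E"
  shows "A \<subseteq> E \<Longrightarrow> forest A \<Longrightarrow> card (components V A) = Suc j \<Longrightarrow>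
    \<exists>T. A \<subseteq> T \<and> T \<subseteq> E \<and> forest T \<and> graph_connected V T \<and> card (T - A) = j"
proof (induction j arbitrary: A)
  case 0
  then show ?case
    using connected_if_card_components_1[of V A] by (intro exI[of _ A]) auto
next
  case (Suc j)
  have "\<not> graph_connected V A"
    using Suc.prems(3) components_of_connected by force
  then obtain x y where "x \<in> V" "y \<in> V" "\<not> reach A x y"
    using conn by (auto simp: graph_connected_iff_reach)
  then obtain p q where pq: "{p, q} \<in> E" "p \<in> component V A x" "q \<notin> component V A x"
    using edge_leaving_component[OF conn] by blast
  have "p \<in> V" "q \<in> V"
    using pq(1) eE by (auto simp: edges_on_def)
  have "\<not> reach A p q"
    using pq \<open>q \<in> V\<close> by (auto simp: component_def dest: reach_trans)
  then have "{p, q} \<notin> A"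
    by (auto dest: reach_edge)
  have "insert {p, q} A \<subseteq> E" "forest (insert {p, q} A)"
    using Suc.prems pq(1) forest_insert \<open>\<not> reach A p q\<close> by auto
  moreover have "card (components V (insert {p, q} A)) = Suc j"
    using card_components_insert[OF fin \<open>p \<in> V\<close> \<open>q \<in> V\<close> \<open>\<not> reach A p q\<close>] Suc.prems by simp
  ultimately have "\<exists>T. insert {p, q} A \<subseteq> T \<and> T \<subseteq> E \<and> forest T \<and> graph_connected V T
      \<and> card (T - insert {p, q} A) = j"
    by (rule Suc.IH)
  then obtain T where T: "insert {p, q} A \<subseteq> T" "T \<subseteq> E" "forest T"
    "graph_connected V T" "card (T - insert {p, q} A) = j"
    by blast
  have "finite T"
    using finite_subset[OF T(2) finite_edges[OF fin eE]] .
  then have "card (insert {p, q} (T - insert {p, q} A)) = Suc j"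
    using T(5) by (subst card_insert_disjoint) auto
  moreover have "T - A = insert {p, q} (T - insert {p, q} A)"
    using T(1) \<open>{p, q} \<notin> A\<close> by blast
  ultimately have "card (T - A) = Suc j"
    by (simp only:)
  with T show ?case
    by blast
qed

lemma forest_extends_to_spanning_tree:
  assumes fin: "finite V" and eE: "edges_on V E" and conn: "graph_connected V E"
    and "A \<subseteq> E" "forest A"
  shows "\<exists>T\<in>spanning_trees V E. A \<subseteq> T \<and> card (T - A) = card (components V A) - 1"
proof -
  have "components V A \<noteq> {}"
    using conn by (simp add: graph_connected_def components_def)
  then have "card (components V A) > 0"
    using fin by (simp add: card_gt_0_iff components_eq_image_component)
  then have "card (components V A) = Suc (card (components V A) - 1)"
    by simp
  then obtain T where "A \<subseteq> T" "T \<subseteq> E" "forest T" "graph_connected V T"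
    "card (T - A) = card (components V A) - 1"
    using forest_extends_by_edges[OF fin eE conn assms(4,5)] by blast
  moreover have "is_tree V T"
    using connected_forest_is_tree \<open>forest T\<close> \<open>graph_connected V T\<close>
      edges_on_subset[OF eE \<open>T \<subseteq> E\<close>] by blast
  ultimately show ?thesis
    by (auto simp: spanning_trees_def)
qed

lemma card_spanning_tree:
  assumes "finite V" "edges_on V E" "T \<in> spanning_trees V E"
  shows "card T + 1 = card V"
proof -
  have "is_tree V T" "edges_on V T"
    using assms edges_on_subset by (auto simp: spanning_trees_def)
  then have "card (components V T) + card T = card V"
    using card_components_forest[OF assms(1)] tree_is_forest by blast
  moreover have "components V T = {V}"
    using \<open>is_tree V T\<close> by (simp add: is_tree_def components_of_connected)
  ultimately show ?thesis
    by simp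
qed

lemma spanning_tree_delete_edges:
  assumes fin: "finite V" and eE: "edges_on V E" and T: "T \<in> spanning_trees V E"
    and "1 \<le> k" "k \<le> card V"
  shows "\<exists>A\<subseteq>T. card (T - A) = k - 1 \<and> card (components V A) = k"
proof -
  have "T \<subseteq> E" "is_tree V T"
    using T by (auto simp: spanning_trees_def)
  then have eT: "edges_on V T"
    using eE edges_on_subset by blast
  then have "forest T" "finite T"
    using tree_is_forest \<open>is_tree V T\<close> finite_edges[OF fin] by blast+
  have card_T: "card T + 1 = card V"
    using card_spanning_tree[OF fin eE T] .
  then obtain F where F: "F \<subseteq> T" "card F = k - 1"
    using obtain_subset_with_card_n[of "k - 1" T] assms(4,5) by force
  have "T - (T - F) = F"
    using F(1) by blast
  moreover have "card (T - F) = card T - (k - 1)"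
    using F \<open>finite T\<close> by (simp add: card_Diff_subset finite_subset)
  moreover have "card (components V (T - F)) + card (T - F) = card V"
    using card_components_forest[OF fin edges_on_subset[OF eT] forest_subset[OF \<open>forest T\<close>]] by blast
  ultimately show ?thesis
    using F(2) card_T assms(4,5) by (intro exI[of _ "T - F"]) auto
qed

section \<open>Spanning forests and connected partitions\<close>

definition k_forests :: "nat \<Rightarrow> 'a set \<Rightarrow> 'a set set \<Rightarrow> 'a set set set" where
  "k_forests k V E = {A. A \<subseteq> E \<and> forest A \<and> card (components V A) = k}"

definition piece_trees :: "'a set set \<Rightarrow> 'a set set \<Rightarrow> ('a set \<Rightarrow> 'a set set) set" where
  "piece_trees E P = PiE P (\<lambda>S. spanning_trees S (induced_edges E S))"

definition balanced_k_forests :: "nat \<Rightarrow> 'a set \<Rightarrow> 'a set set \<Rightarrow> 'a set set set" where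
  "balanced_k_forests k V E = {A\<in>k_forests k V E. balanced (components V A)}"

lemma edges_on_induced_edges: "edges_on V A \<Longrightarrow> edges_on S (induced_edges A S)"
  by (auto simp: edges_on_def induced_edges_def)

lemma graph_connected_mono: "graph_connected V A \<Longrightarrow> A \<subseteq> B \<Longrightarrow> graph_connected V B"
  by (auto simp: graph_connected_iff_reach intro: reach_mono)

lemma finite_spanning_trees: "finite V \<Longrightarrow> edges_on V E \<Longrightarrow> finite (spanning_trees V E)"
  unfolding spanning_trees_def by (rule finite_subset[of _ "Pow E"]) (auto dest: finite_edges)

lemma forest_components_partition:
  assumes eE: "edges_on V E" and "A \<subseteq> E" "forest A"
  shows "components V A \<in> connected_k_partitions (card (components V A)) V E"
    and "restrict (induced_edges A) (components V A) \<in> piece_trees E (components V A)"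
    and "\<Union> (induced_edges A ` components V A) = A"
proof -
  have eA: "edges_on V A"
    using eE assms(2) edges_on_subset by blast
  have piece: "S \<noteq> {} \<and> induced_edges A S \<in> spanning_trees S (induced_edges E S)"
    if S: "S \<in> components V A" for S
  proof -
    obtain x where x: "x \<in> V" "S = component V A x"
      using S by (auto simp: components_eq_image_component)
    then have "graph_connected S (induced_edges A S)"
      using component_connected[OF eA] by blast
    moreover have "forest (induced_edges A S)"
      using forest_subset[OF assms(3)] by (auto simp: induced_edges_def)
    moreover have "induced_edges A S \<subseteq> induced_edges E S"
      using assms(2) by (auto simp: induced_edges_def)
    ultimately show ?thesis
      using connected_forest_is_tree edges_on_induced_edges[OF eA]
      by (auto simp: spanning_trees_def graph_connected_def)
  qed
  show "components V A \<in> connected_k_partitions (card (components V A)) V E"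
    unfolding connected_k_partitions_def
  proof (intro CollectI conjI ballI impI)
    fix S assume "S \<in> components V A"
    then have "S \<noteq> {}" "induced_edges A S \<subseteq> induced_edges E S"
      "graph_connected S (induced_edges A S)"
      using piece by (auto simp: spanning_trees_def is_tree_def)
    then show "S \<noteq> {}" "graph_connected S (induced_edges E S)"
      using graph_connected_mono by blast+
  qed (simp_all add: Union_components components_disjoint)
  show "restrict (induced_edges A) (components V A) \<in> piece_trees E (components V A)"
    using piece by (simp add: piece_trees_def)
  show "\<Union> (induced_edges A ` components V A) = A"
  proof (intro equalityI subsetI)
    fix e assume "e \<in> A"
    then obtain p q where "e = {p, q}" "p \<in> V"
      using edges_onE[OF eA] by metis
    moreover have "p \<in> component V A p"
      using \<open>p \<in> V\<close> by (rule component_self)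
    ultimately have "e \<in> induced_edges A (component V A p)"
      using \<open>e \<in> A\<close> component_closed[OF eA, of p q]
      by (auto simp: induced_edges_def)
    then show "e \<in> \<Union> (induced_edges A ` components V A)"
      using \<open>p \<in> V\<close> by (auto simp: components_eq_image_component)
  qed (auto simp: induced_edges_def)
qed

context
  fixes V :: "'a set" and E :: "'a set set" and k :: nat and P :: "'a set set"
    and h :: "'a set \<Rightarrow> 'a set set"
  assumes eE: "edges_on V E" and P: "P \<in> connected_k_partitions k V E"
    and h: "h \<in> piece_trees E P"
begin

lemma piece_tree_props:
  assumes "S \<in> P"
  shows "h S \<subseteq> induced_edges E S" "is_tree S (h S)" "edges_on S (h S)"
proof -
  show "h S \<subseteq> induced_edges E S" "is_tree S (h S)"
    using h assms by (auto simp: piece_trees_def spanning_trees_def)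
  then show "edges_on S (h S)"
    using edges_on_induced_edges[OF eE, of S] edges_on_subset by blast
qed

lemma union_piece_trees_edge_in_piece:
  assumes "f \<in> \<Union> (h ` P)" "S \<in> P" "f \<inter> S \<noteq> {}"
  shows "f \<in> h S"
proof -
  obtain S' where "S' \<in> P" "f \<in> h S'"
    using assms(1) by blast
  moreover have "f \<subseteq> S'"
    using calculation piece_tree_props(3) by (auto simp: edges_on_def)
  moreover have "S \<inter> S' = {}" if "S \<noteq> S'"
    using P assms(2) \<open>S' \<in> P\<close> that by (auto simp: connected_k_partitions_def)
  ultimately show ?thesis
    using assms(3) by blast
qed

lemma union_piece_trees_closed:
  assumes "{p, q} \<in> \<Union> (h ` P)" "S \<in> P" "p \<in> S"
  shows "q \<in> S"
proof -
  have "{p, q} \<in> h S"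
    using union_piece_trees_edge_in_piece assms by blast
  then show ?thesis
    using piece_tree_props(3)[OF assms(2)] by (auto simp: edges_on_def)
qed

lemma induced_edges_union_piece_trees:
  assumes S: "S \<in> P"
  shows "induced_edges (\<Union> (h ` P)) S = h S"
proof (intro equalityI subsetI)
  fix f assume f: "f \<in> induced_edges (\<Union> (h ` P)) S"
  then obtain S' where "S' \<in> P" "f \<in> h S'"
    by (auto simp: induced_edges_def)
  then have "f \<noteq> {}"
    using piece_tree_props(3) by (fastforce simp: edges_on_def)
  moreover have "f \<subseteq> S"
    using f by (simp add: induced_edges_def)
  ultimately show "f \<in> h S"
    using union_piece_trees_edge_in_piece[OF _ S] f by (auto simp: induced_edges_def)
next
  fix f assume "f \<in> h S"
  then show "f \<in> induced_edges (\<Union> (h ` P)) S"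
    using S piece_tree_props(3)[OF S] by (auto simp: induced_edges_def edges_on_def)
qed

lemma forest_union_piece_trees: "forest (\<Union> (h ` P))"
  unfolding forest_def
proof (intro allI impI notI)
  let ?A = "\<Union> (h ` P)"
  fix p q assume e: "{p, q} \<in> ?A" and r: "reach (?A - {{p, q}}) p q"
  obtain S where S: "S \<in> P" "{p, q} \<in> h S"
    using e by blast
  then have "p \<in> S"
    using piece_tree_props(3)[OF S(1)] by (auto simp: edges_on_def)
  then have "reach (induced_edges (?A - {{p, q}}) S) p q"
    using reach_induced_edges[OF r] union_piece_trees_closed[OF _ S(1)] by blast
  moreover have "induced_edges (?A - {{p, q}}) S = h S - {{p, q}}"
    using induced_edges_union_piece_trees[OF S(1)] by (auto simp: induced_edges_def)
  moreover have "forest (h S)"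
    using tree_is_forest piece_tree_props S(1) by blast
  ultimately show False
    using S(2) by (simp add: forest_def)
qed

lemma component_union_piece_trees:
  assumes S: "S \<in> P" and x: "x \<in> S"
  shows "component V (\<Union> (h ` P)) x = S"
proof (intro equalityI subsetI)
  fix y assume "y \<in> component V (\<Union> (h ` P)) x"
  then show "y \<in> S"
    using reach_induced_edges[OF _ x] union_piece_trees_closed[OF _ S] by (auto simp: component_def)
next
  fix y assume "y \<in> S"
  then have "reach (h S) x y"
    using piece_tree_props(2)[OF S] x by (simp add: is_tree_def graph_connected_iff_reach)
  then have "reach (\<Union> (h ` P)) x y"
    using reach_mono[of "h S" "\<Union> (h ` P)"] S by blast
  moreover have "\<Union> P = V"
    using P by (simp add: connected_k_partitions_def)
  ultimately show "y \<in> component V (\<Union> (h ` P)) x"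
    using \<open>y \<in> S\<close> S by (auto simp: component_def)
qed

lemma components_union_piece_trees: "components V (\<Union> (h ` P)) = P"
proof (intro equalityI subsetI)
  have Union_P: "\<Union> P = V"
    using P by (simp add: connected_k_partitions_def)
  fix C assume "C \<in> components V (\<Union> (h ` P))"
  then obtain x where "x \<in> V" "C = component V (\<Union> (h ` P)) x"
    by (auto simp: components_eq_image_component)
  moreover obtain S where "S \<in> P" "x \<in> S"
    using \<open>x \<in> V\<close> Union_P by blast
  ultimately show "C \<in> P"
    using component_union_piece_trees by simp
next
  fix S assume "S \<in> P"
  moreover obtain x where "x \<in> S"
    using P \<open>S \<in> P\<close> unfolding connected_k_partitions_def by blast
  moreover have "x \<in> V"
    using P calculation by (auto simp: connected_k_partitions_def)
  ultimately show "S \<in> components V (\<Union> (h ` P))"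
    using component_union_piece_trees unfolding components_eq_image_component by blast
qed

lemma union_piece_trees_in_k_forests: "\<Union> (h ` P) \<in> k_forests k V E"
proof -
  have "\<Union> (h ` P) \<subseteq> E"
    using piece_tree_props(1) by (auto simp: induced_edges_def)
  then show ?thesis
    using forest_union_piece_trees components_union_piece_trees P
    by (simp add: k_forests_def connected_k_partitions_def)
qed

end

lemma finite_connected_k_partitions: "finite V \<Longrightarrow> finite (connected_k_partitions k V E)"
  unfolding connected_k_partitions_def by (rule finite_subset[of _ "Pow (Pow V)"]) auto

lemma st_weight_eq_card_piece_trees:
  assumes "finite V" "P \<in> connected_k_partitions k V E"
  shows "st_weight E P = card (piece_trees E P)"
proof -
  have "finite P"
    using assms by (auto simp: connected_k_partitions_def intro: finite_UnionD)
  then show ?thesis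
    by (simp add: st_weight_def tau_def piece_trees_def card_PiE)
qed

lemma finite_piece_trees:
  assumes "finite V" "edges_on V E" "P \<in> connected_k_partitions k V E"
  shows "finite (piece_trees E P)"
proof -
  have "finite P" "\<forall>S\<in>P. S \<subseteq> V"
    using assms(1,3) by (auto simp: connected_k_partitions_def intro: finite_UnionD)
  then show ?thesis
    unfolding piece_trees_def
    using assms(1) edges_on_induced_edges[OF assms(2)]
    by (intro finite_PiE) (auto intro: finite_spanning_trees finite_subset)
qed

lemma sum_st_weight_eq_card_k_forests:
  assumes fin: "finite V" and eE: "edges_on V E" and Q: "Q \<subseteq> connected_k_partitions k V E"
  shows "(\<Sum>P\<in>Q. st_weight E P) = card {A\<in>k_forests k V E. components V A \<in> Q}"
proof -
  have "finite Q"
    using finite_subset[OF Q finite_connected_k_partitions[OF fin]] .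
  have "(\<Sum>P\<in>Q. st_weight E P) = (\<Sum>P\<in>Q. card (piece_trees E P))"
    using Q st_weight_eq_card_piece_trees[OF fin] by (intro sum.cong) auto
  also have "\<dots> = card (Sigma Q (piece_trees E))"
    using \<open>finite Q\<close> Q finite_piece_trees[OF fin eE] by (subst card_SigmaI) auto
  also have "\<dots> = card {A\<in>k_forests k V E. components V A \<in> Q}"
  proof (rule bij_betw_same_card, rule bij_betw_byWitness)
    let ?split = "\<lambda>A. (components V A, restrict (induced_edges A) (components V A))"
    show "\<forall>x\<in>Sigma Q (piece_trees E). ?split ((\<lambda>(P, h). \<Union> (h ` P)) x) = x"
    proof (clarsimp)
      fix P h assume "P \<in> Q" "h \<in> piece_trees E P"
      then have "P \<in> connected_k_partitions k V E"
        using Q by blast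
      note glue = \<open>P \<in> connected_k_partitions k V E\<close> \<open>h \<in> piece_trees E P\<close>
      have "h = restrict h P"
        using \<open>h \<in> piece_trees E P\<close> by (simp add: piece_trees_def extensional_restrict)
      also have "\<dots> = restrict (induced_edges (\<Union> (h ` P))) P"
        using induced_edges_union_piece_trees[OF eE glue] by (intro restrict_ext) simp
      finally show "components V (\<Union> (h ` P)) = P \<and>
          restrict (induced_edges (\<Union> (h ` P))) (components V (\<Union> (h ` P))) = h"
        using components_union_piece_trees[OF eE glue] by simp
    qed
    show "\<forall>A\<in>{A \<in> k_forests k V E. components V A \<in> Q}. (\<lambda>(P, h). \<Union> (h ` P)) (?split A) = A"
      using forest_components_partition(3)[OF eE] by (simp add: k_forests_def)
    show "(\<lambda>(P, h). \<Union> (h ` P)) ` Sigma Q (piece_trees E) \<subseteq> {A \<in> k_forests k V E. components V A \<in> Q}"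
      using union_piece_trees_in_k_forests[OF eE] components_union_piece_trees[OF eE] Q by auto
    show "?split ` {A \<in> k_forests k V E. components V A \<in> Q} \<subseteq> Sigma Q (piece_trees E)"
      using forest_components_partition(2)[OF eE] by (auto simp: k_forests_def)
  qed
  finally show ?thesis .
qed

section \<open>Double counting trees against forests\<close>

lemma card_le_mult_fibre_bound:
  assumes "finite A" "finite B" "\<forall>a\<in>A. \<exists>b\<in>B. R a b" "\<forall>b\<in>B. card {a\<in>A. R a b} \<le> c"
  shows "card A \<le> c * card B"
proof -
  have "card A \<le> card (\<Union>b\<in>B. {a\<in>A. R a b})"
    using assms(3) by (intro card_mono[OF finite_subset[OF _ assms(1)]]) auto
  also have "\<dots> \<le> (\<Sum>b\<in>B. card {a\<in>A. R a b})"
    by (rule card_UN_le[OF assms(2)])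
  also have "\<dots> \<le> (\<Sum>b\<in>B. c)"
    using assms(4) by (intro sum_mono) auto
  finally show ?thesis
    by (simp add: mult.commute)
qed

lemma card_supersets_le:
  assumes "finite E"
  shows "card {T. T \<subseteq> E \<and> A \<subseteq> T \<and> card (T - A) = j} \<le> card E choose j"
proof -
  have "inj_on (\<lambda>T. T - A) {T. T \<subseteq> E \<and> A \<subseteq> T \<and> card (T - A) = j}"
    by (rule inj_onI) blast
  moreover have "(\<lambda>T. T - A) ` {T. T \<subseteq> E \<and> A \<subseteq> T \<and> card (T - A) = j} \<subseteq> {F. F \<subseteq> E \<and> card F = j}"
    by auto
  ultimately show ?thesis
    using card_inj_on_le[of _ _ "{F. F \<subseteq> E \<and> card F = j}"] n_subsets[OF assms] assms by simp
qed

lemma card_subsets_le: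
  assumes "finite E" "T \<subseteq> E"
  shows "card {A. A \<subseteq> T \<and> card (T - A) = j} \<le> card E choose j"
proof -
  have "inj_on (\<lambda>A. T - A) {A. A \<subseteq> T \<and> card (T - A) = j}"
    by (rule inj_onI) blast
  moreover have "(\<lambda>A. T - A) ` {A. A \<subseteq> T \<and> card (T - A) = j} \<subseteq> {F. F \<subseteq> E \<and> card F = j}"
    using assms(2) by auto
  ultimately show ?thesis
    using card_inj_on_le[of _ _ "{F. F \<subseteq> E \<and> card F = j}"] n_subsets[OF assms(1)] assms(1) by simp
qed

lemma finite_k_forests: "finite V \<Longrightarrow> edges_on V E \<Longrightarrow> finite (k_forests k V E)"
  unfolding k_forests_def by (rule finite_subset[of _ "Pow E"]) (auto dest: finite_edges)

lemma card_trees_le_mult_forests: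
  assumes fin: "finite V" and eE: "edges_on V E"
    and X: "X \<subseteq> spanning_trees V E" and Y: "Y \<subseteq> k_forests k V E"
    and "\<forall>T\<in>X. \<exists>A\<in>Y. A \<subseteq> T \<and> card (T - A) = k - 1"
  shows "card X \<le> (card E choose (k - 1)) * card Y"
proof (rule card_le_mult_fibre_bound[where R = "\<lambda>T A. A \<subseteq> T \<and> card (T - A) = k - 1"])
  show "finite X" "finite Y"
    using finite_subset X Y finite_spanning_trees[OF fin eE] finite_k_forests[OF fin eE] by blast+
  show "\<forall>A\<in>Y. card {T\<in>X. A \<subseteq> T \<and> card (T - A) = k - 1} \<le> card E choose (k - 1)"
  proof
    fix A
    have "{T\<in>X. A \<subseteq> T \<and> card (T - A) = k - 1} \<subseteq> {T. T \<subseteq> E \<and> A \<subseteq> T \<and> card (T - A) = k - 1}"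
      using X by (auto simp: spanning_trees_def)
    moreover have "finite {T. T \<subseteq> E \<and> A \<subseteq> T \<and> card (T - A) = k - 1}"
      using finite_edges[OF fin eE] by (auto intro: rev_finite_subset[OF finite_Collect_subsets])
    ultimately have "card {T\<in>X. A \<subseteq> T \<and> card (T - A) = k - 1}
        \<le> card {T. T \<subseteq> E \<and> A \<subseteq> T \<and> card (T - A) = k - 1}"
      by (rule card_mono[rotated])
    then show "card {T\<in>X. A \<subseteq> T \<and> card (T - A) = k - 1} \<le> card E choose (k - 1)"
      using card_supersets_le[OF finite_edges[OF fin eE]] le_trans by blast
  qed
qed (use assms(5) in blast)

lemma card_forests_le_mult_trees:
  assumes fin: "finite V" and eE: "edges_on V E"
    and X: "X \<subseteq> spanning_trees V E" and Y: "Y \<subseteq> k_forests k V E"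
    and "\<forall>A\<in>Y. \<exists>T\<in>X. A \<subseteq> T \<and> card (T - A) = k - 1"
  shows "card Y \<le> (card E choose (k - 1)) * card X"
proof (rule card_le_mult_fibre_bound[where R = "\<lambda>A T. A \<subseteq> T \<and> card (T - A) = k - 1"])
  show "finite X" "finite Y"
    using finite_subset X Y finite_spanning_trees[OF fin eE] finite_k_forests[OF fin eE] by blast+
  show "\<forall>T\<in>X. card {A\<in>Y. A \<subseteq> T \<and> card (T - A) = k - 1} \<le> card E choose (k - 1)"
  proof
    fix T assume "T \<in> X"
    then have "T \<subseteq> E"
      using X by (auto simp: spanning_trees_def)
    have "{A\<in>Y. A \<subseteq> T \<and> card (T - A) = k - 1} \<subseteq> {A. A \<subseteq> T \<and> card (T - A) = k - 1}"
      by blast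
    moreover have "finite {A. A \<subseteq> T \<and> card (T - A) = k - 1}"
      using finite_subset[OF \<open>T \<subseteq> E\<close> finite_edges[OF fin eE]]
      by (auto intro: rev_finite_subset[OF finite_Collect_subsets])
    ultimately have "card {A\<in>Y. A \<subseteq> T \<and> card (T - A) = k - 1}
        \<le> card {A. A \<subseteq> T \<and> card (T - A) = k - 1}"
      by (rule card_mono[rotated])
    then show "card {A\<in>Y. A \<subseteq> T \<and> card (T - A) = k - 1} \<le> card E choose (k - 1)"
      using card_subsets_le[OF finite_edges[OF fin eE] \<open>T \<subseteq> E\<close>] le_trans by blast
  qed
qed (use assms(5) in blast)

lemma edge_subsets_choose_le:
  assumes "finite V" "edges_on V E"
  shows "card E choose j \<le> card V ^ (2 * j)"
proof -
  have choose_le_pow: "n choose i \<le> n ^ i" for n i :: nat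
    by (cases "i \<le> n") (auto intro: binomial_le_pow simp: binomial_eq_0)
  have "card E \<le> card {e. e \<subseteq> V \<and> card e = 2}"
    using assms by (intro card_mono) (auto simp: edges_on_def)
  also have "\<dots> = card V choose 2"
    using n_subsets[OF assms(1)] .
  also have "\<dots> \<le> card V ^ 2"
    by (rule choose_le_pow)
  finally have "card E \<le> card V ^ 2" .
  have "card E choose j \<le> card E ^ j"
    by (rule choose_le_pow)
  also have "\<dots> \<le> card V ^ (2 * j)"
    using power_mono[OF \<open>card E \<le> card V ^ 2\<close>, of j] by (simp add: power_mult)
  finally show ?thesis .
qed

lemma prob_balanced_eq_forest_ratio:
  assumes "finite V" "edges_on V E"
  shows "prob_balanced k V E = card (balanced_k_forests k V E) / card (k_forests k V E)"
proof -
  have partition: "components V A \<in> connected_k_partitions k V E" if "A \<in> k_forests k V E" for A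
    using forest_components_partition(1)[OF assms(2)] that by (auto simp: k_forests_def)
  have "{A\<in>k_forests k V E. components V A \<in> connected_k_partitions k V E} = k_forests k V E"
    using partition by blast
  moreover have "{A\<in>k_forests k V E. components V A \<in> {P\<in>connected_k_partitions k V E. balanced P}}
      = balanced_k_forests k V E"
    using partition by (auto simp: balanced_k_forests_def)
  ultimately show ?thesis
    unfolding prob_balanced_def
    using sum_st_weight_eq_card_k_forests[OF assms, of "connected_k_partitions k V E" k]
      sum_st_weight_eq_card_k_forests[OF assms, of "{P\<in>connected_k_partitions k V E. balanced P}" k]
    by simp
qed

lemma k_splittable_iff_balanced_forest:
  assumes eE: "edges_on V E" and T: "T \<in> spanning_trees V E"
  shows "k_splittable k V T \<longleftrightarrow> (\<exists>A\<in>balanced_k_forests k V E. A \<subseteq> T \<and> card (T - A) = k - 1)"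
proof -
  have "T \<subseteq> E" "forest T"
    using T tree_is_forest edges_on_subset[OF eE] by (auto simp: spanning_trees_def)
  have "k_splittable k V T \<longleftrightarrow>
      (\<exists>F. F \<subseteq> T \<and> card F = k - 1 \<and> T - (T - F) = F \<and> T - F \<in> balanced_k_forests k V E)"
    using \<open>T \<subseteq> E\<close> forest_subset[OF \<open>forest T\<close>]
    by (auto simp: k_splittable_def balanced_k_forests_def k_forests_def balanced_def)
  also have "\<dots> \<longleftrightarrow> (\<exists>A\<in>balanced_k_forests k V E. A \<subseteq> T \<and> card (T - A) = k - 1)"
  proof
    assume "\<exists>A\<in>balanced_k_forests k V E. A \<subseteq> T \<and> card (T - A) = k - 1"
    then obtain A where "A \<in> balanced_k_forests k V E" "A \<subseteq> T" "card (T - A) = k - 1"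
      by blast
    moreover have "T - (T - A) = A"
      using \<open>A \<subseteq> T\<close> by blast
    ultimately show "\<exists>F. F \<subseteq> T \<and> card F = k - 1 \<and> T - (T - F) = F \<and> T - F \<in> balanced_k_forests k V E"
      by (intro exI[of _ "T - A"]) auto
  qed (metis Diff_subset)
  finally show ?thesis .
qed

lemma ratio_lower_bound_transfer:
  fixes a b a' b' c p :: real
  assumes "0 \<le> a" "0 \<le> b" "0 \<le> a'" "1 \<le> c" "0 < p"
    and "a \<le> c * a'" "b' \<le> c * b" "a' \<le> b'" "1 / p \<le> a / b"
  shows "1 / (p * c\<^sup>2) \<le> a' / b'"
proof -
  have "b > 0"
    using assms(2,5,9) by (cases "b = 0") (auto simp: divide_simps)
  have "a > 0"
    using assms(1,5,9) \<open>b > 0\<close> by (cases "a = 0") (auto simp: divide_simps)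
  then have "a' > 0" "b' > 0"
    using assms(4,6,8) by (auto intro: mult_pos_pos dest: order.strict_trans2 simp: zero_less_mult_iff)
  have "1 / (p * c\<^sup>2) = (1 / p) / c\<^sup>2"
    by simp
  also have "\<dots> \<le> (a / b) / c\<^sup>2"
    using assms(4,9) by (intro divide_right_mono) auto
  also have "\<dots> = (a / c) / (c * b)"
    by (simp add: power2_eq_square field_simps)
  also have "\<dots> \<le> a' / (c * b)"
    using assms(4,6) \<open>b > 0\<close> by (intro divide_right_mono) (auto simp: field_simps)
  also have "\<dots> \<le> a' / b'"
    using assms(7) \<open>a' > 0\<close> \<open>b' > 0\<close> by (intro divide_left_mono) auto
  finally show ?thesis .
qed

context
  fixes V :: "'a set" and E :: "'a set set" and k :: nat
  assumes fin: "finite V" and eE: "edges_on V E" and conn: "graph_connected V E"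
begin

lemma k_forest_extends:
  "A \<in> k_forests k V E \<Longrightarrow> \<exists>T\<in>spanning_trees V E. A \<subseteq> T \<and> card (T - A) = k - 1"
  using forest_extends_to_spanning_tree[OF fin eE conn] by (auto simp: k_forests_def)

lemma card_splittable_trees_le:
  "card {T\<in>spanning_trees V E. k_splittable k V T}
     \<le> (card E choose (k - 1)) * card (balanced_k_forests k V E)"
  using k_splittable_iff_balanced_forest[OF eE]
  by (intro card_trees_le_mult_forests[OF fin eE]) (auto simp: balanced_k_forests_def)

lemma card_k_forests_le: "card (k_forests k V E) \<le> (card E choose (k - 1)) * card (spanning_trees V E)"
  using k_forest_extends by (intro card_forests_le_mult_trees[OF fin eE]) auto

lemma card_balanced_k_forests_le:
  "card (balanced_k_forests k V E)
     \<le> (card E choose (k - 1)) * card {T\<in>spanning_trees V E. k_splittable k V T}"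
proof (rule card_forests_le_mult_trees[OF fin eE])
  show "\<forall>A\<in>balanced_k_forests k V E.
      \<exists>T\<in>{T\<in>spanning_trees V E. k_splittable k V T}. A \<subseteq> T \<and> card (T - A) = k - 1"
  proof
    fix A assume A: "A \<in> balanced_k_forests k V E"
    then obtain T where "T \<in> spanning_trees V E" "A \<subseteq> T" "card (T - A) = k - 1"
      using k_forest_extends by (auto simp: balanced_k_forests_def)
    then show "\<exists>T\<in>{T\<in>spanning_trees V E. k_splittable k V T}. A \<subseteq> T \<and> card (T - A) = k - 1"
      using k_splittable_iff_balanced_forest[OF eE] A by blast
  qed
qed (auto simp: balanced_k_forests_def)

lemma card_spanning_trees_le:
  assumes "1 \<le> k" "k \<le> card V"
  shows "card (spanning_trees V E) \<le> (card E choose (k - 1)) * card (k_forests k V E)"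
proof (rule card_trees_le_mult_forests[OF fin eE order_refl order_refl], intro ballI)
  fix T assume T: "T \<in> spanning_trees V E"
  then obtain A where "A \<subseteq> T" "card (T - A) = k - 1" "card (components V A) = k"
    using spanning_tree_delete_edges[OF fin eE T assms] by blast
  moreover have "T \<subseteq> E" "forest T"
    using T tree_is_forest edges_on_subset[OF eE] by (auto simp: spanning_trees_def)
  ultimately have "A \<in> k_forests k V E"
    using forest_subset by (auto simp: k_forests_def)
  then show "\<exists>A\<in>k_forests k V E. A \<subseteq> T \<and> card (T - A) = k - 1"
    using \<open>A \<subseteq> T\<close> \<open>card (T - A) = k - 1\<close> by blast
qed

lemma prob_splittable_prob_balanced_comparable:
  assumes k: "1 \<le> k" and p: "0 < p"
  shows "1 / p \<le> prob_splittable k V E \<Longrightarrow>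
      1 / (p * real (card V) ^ (4 * (k - 1))) \<le> prob_balanced k V E"
    and "1 / p \<le> prob_balanced k V E \<Longrightarrow>
      1 / (p * real (card V) ^ (4 * (k - 1))) \<le> prob_splittable k V E"
proof -
  let ?N = "spanning_trees V E" and ?S = "{T\<in>spanning_trees V E. k_splittable k V T}"
  let ?Z = "k_forests k V E" and ?B = "balanced_k_forests k V E"
  define c where "c = real (card V) ^ (2 * (k - 1))"
  have "card V \<ge> 1"
    using conn fin by (simp add: graph_connected_def Suc_le_eq card_gt_0_iff)
  then have "1 \<le> c"
    by (simp add: c_def one_le_power)
  have c_squared: "c\<^sup>2 = real (card V) ^ (4 * (k - 1))"
    by (simp add: c_def power_mult[symmetric] mult.commute)
  have le_c: "real (card X) \<le> c * real (card Y)"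
    if "card X \<le> (card E choose (k - 1)) * card Y" for X Y :: "'a set set set"
  proof -
    have "real (card X) \<le> real (card E choose (k - 1)) * real (card Y)"
      using that by (metis of_nat_le_iff of_nat_mult)
    also have "\<dots> \<le> c * real (card Y)"
      using edge_subsets_choose_le[OF fin eE, of "k - 1"] unfolding c_def
      by (intro mult_right_mono) (auto simp: of_nat_power[symmetric] simp del: of_nat_power)
    finally show ?thesis .
  qed
  have "card ?S \<le> card ?N" "card ?B \<le> card ?Z"
    using finite_spanning_trees[OF fin eE] finite_k_forests[OF fin eE]
    by (auto intro: card_mono simp: balanced_k_forests_def)
  note ratios = prob_splittable_def prob_balanced_eq_forest_ratio[OF fin eE]
  show "1 / (p * real (card V) ^ (4 * (k - 1))) \<le> prob_balanced k V E"
    if "1 / p \<le> prob_splittable k V E"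
  proof -
    have "1 / p \<le> real (card ?S) / real (card ?N)"
      using that by (simp add: ratios)
    then show ?thesis
      using ratio_lower_bound_transfer[OF _ _ _ \<open>1 \<le> c\<close> p
          le_c[OF card_splittable_trees_le] le_c[OF card_k_forests_le]]
        \<open>card ?B \<le> card ?Z\<close> c_squared by (simp add: ratios)
  qed
  show "1 / (p * real (card V) ^ (4 * (k - 1))) \<le> prob_splittable k V E"
    if "1 / p \<le> prob_balanced k V E"
  proof -
    have ratio: "1 / p \<le> real (card ?B) / real (card ?Z)"
      using that by (simp add: ratios)
    have "?B \<noteq> {}"
    proof
      assume "?B = {}"
      then show False
        using ratio p by simp
    qed
    then obtain A where "A \<in> ?B"
      by blast
    then have "k \<le> card V"
      using fin card_image_le[of V "component V A"]
      by (auto simp: balanced_k_forests_def k_forests_def components_eq_image_component)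
    then show ?thesis
      using ratio_lower_bound_transfer[OF _ _ _ \<open>1 \<le> c\<close> p
          le_c[OF card_balanced_k_forests_le] le_c[OF card_spanning_trees_le[OF k]] _ ratio]
        \<open>card ?S \<le> card ?N\<close> c_squared by (simp add: ratios)
  qed
qed

end

lemma inverse_poly_bound_transfer:
  fixes X :: "('a \<times> 'b) set" and n :: "'a \<Rightarrow> real" and f g :: "'a \<Rightarrow> 'b \<Rightarrow> real"
  assumes pos: "\<And>V E. (V, E) \<in> X \<Longrightarrow> 0 < n V"
    and transfer: "\<And>V E c. (V, E) \<in> X \<Longrightarrow> 0 < c \<Longrightarrow> 1 / c \<le> f V E \<Longrightarrow> 1 / (c * n V ^ d) \<le> g V E"
    and "\<exists>p :: real poly. \<forall>(V, E)\<in>X. 0 < poly p (n V) \<and> 1 / poly p (n V) \<le> f V E"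
  shows "\<exists>q :: real poly. \<forall>(V, E)\<in>X. 0 < poly q (n V) \<and> 1 / poly q (n V) \<le> g V E"
proof -
  obtain p :: "real poly" where p: "\<forall>(V, E)\<in>X. 0 < poly p (n V) \<and> 1 / poly p (n V) \<le> f V E"
    using assms(3) by blast
  have "\<forall>(V, E)\<in>X. 0 < poly (p * monom 1 d) (n V) \<and> 1 / poly (p * monom 1 d) (n V) \<le> g V E"
    using p pos transfer by (auto simp: poly_monom)
  then show ?thesis ..
qed

theorem mainTheorem7:
  fixes \<G> :: "('a set \<times> 'a set set) set" and k :: nat
  assumes "k \<ge> 1"
    and "\<forall>(V, E)\<in>\<G>. wf_graph V E \<and> graph_connected V E"
  shows "(\<exists>p :: real poly. \<forall>(V, E)\<in>\<G>.
            poly p (real (card V)) > 0 \<and> prob_splittable k V E \<ge> 1 / poly p (real (card V)))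
     \<longleftrightarrow> (\<exists>q :: real poly. \<forall>(V, E)\<in>\<G>.
            poly q (real (card V)) > 0 \<and> prob_balanced k V E \<ge> 1 / poly q (real (card V)))"
proof -
  have graph: "wf_graph V E" "graph_connected V E" if "(V, E) \<in> \<G>" for V E
    using assms(2) that by auto
  then have pos: "0 < real (card V)" if "(V, E) \<in> \<G>" for V E
    using that by (auto simp: wf_graph_def graph_connected_def card_gt_0_iff)
  have split_to_balanced: "1 / (c * real (card V) ^ (4 * (k - 1))) \<le> prob_balanced k V E"
    if "(V, E) \<in> \<G>" "0 < c" "1 / c \<le> prob_splittable k V E" for V E c
    using graph[OF that(1)] prob_splittable_prob_balanced_comparable(1)[OF _ _ _ assms(1) that(2,3)]
    by (simp add: wf_graph_iff)
  have balanced_to_split: "1 / (c * real (card V) ^ (4 * (k - 1))) \<le> prob_splittable k V E"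
    if "(V, E) \<in> \<G>" "0 < c" "1 / c \<le> prob_balanced k V E" for V E c
    using graph[OF that(1)] prob_splittable_prob_balanced_comparable(2)[OF _ _ _ assms(1) that(2,3)]
    by (simp add: wf_graph_iff)
  show ?thesis
    using inverse_poly_bound_transfer[where n = "\<lambda>V. real (card V)", OF pos split_to_balanced]
      inverse_poly_bound_transfer[where n = "\<lambda>V. real (card V)", OF pos balanced_to_split]
    by (intro iffI) simp_all
qed

end
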